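(* Let $Q\in\mathbb{R}^{n\times n}$ be any symmetric matrix (not necessarily definite), $\mathcal{S}=\{x\in\mathbb{R}^n: x^TQx\le1\}$, and $A\in\mathbb{R}^{n\times n}$. Then $\mathcal{S}$ is an invariant set for the discrete system $x_{k+1}=Ax_k$ (i.e., $A\mathcal{S}\subseteq\mathcal{S}$) if and only if there exists $\mu\in[0,1]$ such that $A^TQA-\mu Q\preceq0$.
   Context: $\preceq 0$ denotes negative semidefiniteness of a symmetric matrix. *)

theory Defs
  imports "HOL-Analysis.Analysis"
begin

definition neg_semidef :: "real^'n^'n \<Rightarrow> bool" where
  "neg_semidef M \<longleftrightarrow> (\<forall>x::real^'n. x \<bullet> (M *v x) \<le> 0)"

end

theory Submission
  imports Defs
begin

(*
  Write q_M(z) = z'Mz for the quadratic form of M, and M = A'QA, so that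
  q_M(z) = q_Q(Az).  By homogeneity of degree two, A S \<subseteq> S is equivalent to
    (i)  q_Q(z) \<le> 0 \<Longrightarrow> q_M(z) \<le> 0,   and   (ii) q_Q(z) > 0 \<Longrightarrow> q_M(z) \<le> q_Q(z).
  The converse direction of the theorem is immediate from q_M \<le> \<mu> q_Q.  For the
  forward direction we need a multiplier \<mu> \<in> [0,1] with q_M \<le> \<mu> q_Q everywhere
  (a homogeneous S-lemma).  The key fact is a separation of ratios: if
  q_Q(x) > 0 > q_Q(y) and (i) holds, then q_M(x)/q_Q(x) \<le> q_M(y)/q_Q(y).  It is
  proved by restricting both forms to the line x + t y, which turns it into a
  statement about two real quadratics in t: the concave one has a root on each
  side of 0, and a convex quadratic that is nonpositive on both sides of 0 is
  nonpositive at 0.  Then \<mu> = sup ({0} \<union> {ratios on the positive side}) works.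
  Symmetry of Q is never used: only the values of the quadratic forms matter.
*)

lemma concave_quadratic_roots:
  fixes c0 c1 c2 :: real
  assumes c0: "c0 > 0" and c2: "c2 < 0"
  obtains t1 t2 where "t2 < 0" "0 < t1"
    "c0 + c1*t1 + c2*t1^2 = 0" "c0 + c1*t2 + c2*t2^2 = 0"
proof -
  define s where "s = sqrt (c1^2 - 4*c0*c2)"
  have disc: "c1^2 < c1^2 - 4*c0*c2" using c0 c2 by (simp add: mult_pos_neg)
  then have "0 \<le> c1^2 - 4*c0*c2" using zero_le_power2[of c1] by linarith
  then have s2: "s^2 = c1^2 - 4*c0*c2" unfolding s_def by simp
  have s_gt: "\<bar>c1\<bar> < s"
    unfolding s_def using real_sqrt_less_mono[OF disc] by simp
  have root: "c0 + c1*t + c2*t^2 = 0" if "t * (2*c2) = -c1 + e * s" "e^2 = 1" for t e :: real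
  proof -
    have "4*c2*(c0 + c1*t + c2*t^2) = 4*c2*c0 + 2*c1*(t * (2*c2)) + (t * (2*c2))^2"
      by (simp add: algebra_simps power2_eq_square)
    also have "\<dots> = 4*c2*c0 - c1^2 + e^2 * s^2"
      unfolding that(1) by (simp add: algebra_simps power2_eq_square)
    also have "\<dots> = 0" using that(2) s2 by simp
    finally show ?thesis using c2 by simp
  qed
  define t1 t2 where "t1 = (-c1 - s) / (2*c2)" and "t2 = (-c1 + s) / (2*c2)"
  have "t2 < 0" unfolding t2_def using s_gt c2 by (auto intro!: divide_pos_neg)
  moreover have "0 < t1" unfolding t1_def using s_gt c2 by (auto intro!: divide_neg_neg)
  moreover have "c0 + c1*t1 + c2*t1^2 = 0" using root[of t1 "-1"] c2 unfolding t1_def by simp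
  moreover have "c0 + c1*t2 + c2*t2^2 = 0" using root[of t2 1] c2 unfolding t2_def by simp
  ultimately show thesis by (rule that)
qed

lemma convex_quadratic_nonpos_at_0:
  fixes r0 r1 r2 t1 t2 :: real
  assumes "r2 \<ge> 0" and t: "t2 < 0" "0 < t1"
    and h1: "r0 + r1*t1 + r2*t1^2 \<le> 0" and h2: "r0 + r1*t2 + r2*t2^2 \<le> 0"
  shows "r0 \<le> 0"
proof -
  have "(t1 - t2) * r0 = t1*(r0 + r1*t2 + r2*t2^2) - t2*(r0 + r1*t1 + r2*t1^2) + r2*t1*t2*(t1 - t2)"
    by (simp add: algebra_simps power2_eq_square)
  also have "\<dots> \<le> 0"
  proof -
    have "t1*(r0 + r1*t2 + r2*t2^2) \<le> 0" using t h2 by (simp add: mult_nonneg_nonpos)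
    moreover have "t2*(r0 + r1*t1 + r2*t1^2) \<ge> 0" using t h1 by (simp add: mult_nonpos_nonpos)
    moreover have "r2*t1*t2*(t1 - t2) \<le> 0"
      using t \<open>r2 \<ge> 0\<close> by (simp add: mult_nonneg_nonpos mult_nonpos_nonneg)
    ultimately show ?thesis by linarith
  qed
  finally show ?thesis using t by (simp add: mult_le_0_iff)
qed

lemma quadratic_ratio_separation:
  fixes q0 q1 q2 p0 p1 p2 :: real
  assumes q0: "q0 > 0" and q2: "q2 < 0"
    and sub: "\<And>t. q0 + q1*t + q2*t^2 \<le> 0 \<Longrightarrow> p0 + p1*t + p2*t^2 \<le> 0"
  shows "p0 / q0 \<le> p2 / q2"
proof (rule ccontr)
  assume reversed: "\<not> p0 / q0 \<le> p2 / q2"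
  define lam where "lam = (p2 / q2 + p0 / q0) / 2"
  have midpoint: "x < (x + y) / 2 \<and> (x + y) / 2 < y" if "x < y" for x y :: real
    using that by simp
  have "p2 / q2 < lam" and "lam < p0 / q0"
    using midpoint[of "p2 / q2" "p0 / q0"] reversed unfolding lam_def by simp_all
  then have lam0: "lam * q0 < p0" and lam2: "lam * q2 < p2"
    using q0 q2 by (simp_all add: less_divide_eq divide_less_eq)
  obtain t1 t2 where t: "t2 < 0" "0 < t1"
    and z1: "q0 + q1*t1 + q2*t1^2 = 0" and z2: "q0 + q1*t2 + q2*t2^2 = 0"
    using concave_quadratic_roots[OF q0 q2] by blast
  have shifted: "(p0 - lam*q0) + (p1 - lam*q1)*t + (p2 - lam*q2)*t^2 \<le> 0"
    if "q0 + q1*t + q2*t^2 = 0" for t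
  proof -
    have "(p0 - lam*q0) + (p1 - lam*q1)*t + (p2 - lam*q2)*t^2
          = (p0 + p1*t + p2*t^2) - lam*(q0 + q1*t + q2*t^2)"
      by (simp add: algebra_simps)
    then show ?thesis using sub[of t] that by simp
  qed
  have "p0 - lam*q0 \<le> 0"
    by (rule convex_quadratic_nonpos_at_0[OF _ t shifted[OF z1] shifted[OF z2]]) (use lam2 in simp)
  then show False using lam0 by simp
qed

definition qform :: "real^'n^'n \<Rightarrow> real^'n \<Rightarrow> real" where
  "qform M z = z \<bullet> (M *v z)"

lemma qform_scaleR: "qform M (c *\<^sub>R z) = c^2 * qform M z"
  by (simp add: qform_def matrix_vector_mult_scaleR power2_eq_square)

lemma qform_line:
  "qform M (x + t *\<^sub>R y) = qform M x + (x \<bullet> (M *v y) + y \<bullet> (M *v x)) * t + qform M y * t^2"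
  by (simp add: qform_def matrix_vector_right_distrib matrix_vector_mult_scaleR
      inner_add_left inner_add_right algebra_simps power2_eq_square)

lemma qform_congruence: "qform (transpose A ** Q ** A) z = qform Q (A *v z)"
proof -
  have "(transpose A ** Q ** A) *v z = transpose A *v (Q *v (A *v z))"
    by (simp add: matrix_vector_mul_assoc matrix_mul_assoc)
  also have "\<dots> = (Q *v (A *v z)) v* A" by simp
  finally have "(transpose A ** Q ** A) *v z = (Q *v (A *v z)) v* A" .
  then have "qform (transpose A ** Q ** A) z = ((Q *v (A *v z)) v* A) \<bullet> z"
    unfolding qform_def by (simp add: inner_commute)
  also have "\<dots> = (Q *v (A *v z)) \<bullet> (A *v z)" by (rule dot_lmul_matrix)
  finally show ?thesis unfolding qform_def by (simp add: inner_commute)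
qed

lemma neg_semidef_diff_iff:
  fixes M Q :: "real^'n^'n"
  shows "neg_semidef (M - \<mu> *\<^sub>R Q) \<longleftrightarrow> (\<forall>z. qform M z \<le> \<mu> * qform Q z)"
proof -
  have "(\<mu> *\<^sub>R Q) *v z = \<mu> *\<^sub>R (Q *v z)" for z :: "real^'n"
    by (simp add: matrix_vector_mult_def vec_eq_iff sum_distrib_left algebra_simps)
  then show ?thesis
    unfolding neg_semidef_def qform_def
    by (simp add: matrix_vector_mult_diff_rdistrib inner_diff_right)
qed

lemma qform_ratio_separation:
  assumes qx: "qform Q x > 0" and qy: "qform Q y < 0"
    and cone: "\<And>z. qform Q z \<le> 0 \<Longrightarrow> qform M z \<le> 0"
  shows "qform M x / qform Q x \<le> qform M y / qform Q y"
proof (rule quadratic_ratio_separation[OF qx qy])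
  fix t :: real
  assume "qform Q x + (x \<bullet> (Q *v y) + y \<bullet> (Q *v x)) * t + qform Q y * t^2 \<le> 0"
  then have "qform M (x + t *\<^sub>R y) \<le> 0" by (intro cone) (simp only: qform_line)
  then show "qform M x + (x \<bullet> (M *v y) + y \<bullet> (M *v x)) * t + qform M y * t^2 \<le> 0"
    by (simp only: qform_line)
qed

lemma qform_multiplier_exists:
  fixes b :: real
  assumes "b \<ge> 0"
    and cone: "\<And>z. qform Q z \<le> 0 \<Longrightarrow> qform M z \<le> 0"
    and pos: "\<And>z. qform Q z > 0 \<Longrightarrow> qform M z \<le> b * qform Q z"
  shows "\<exists>\<mu>. 0 \<le> \<mu> \<and> \<mu> \<le> b \<and> (\<forall>z. qform M z \<le> \<mu> * qform Q z)"
proof -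
  define R where "R = insert 0 {qform M z / qform Q z | z. qform Q z > 0}"
  define \<mu> where "\<mu> = Sup R"
  have R_le_b: "r \<le> b" if "r \<in> R" for r
    using that pos \<open>b \<ge> 0\<close> unfolding R_def by (auto simp: field_simps)
  have bdd: "bdd_above R" using R_le_b by (intro bdd_aboveI) auto
  have R_le_mu: "r \<le> \<mu>" if "r \<in> R" for r
    unfolding \<mu>_def using that bdd by (rule cSup_upper)
  have mu_le: "\<mu> \<le> c" if "\<And>r. r \<in> R \<Longrightarrow> r \<le> c" for c
    unfolding \<mu>_def using that by (intro cSup_least) (auto simp: R_def)
  have "qform M z \<le> \<mu> * qform Q z" for z
  proof (cases "qform Q z" "0 :: real" rule: linorder_cases)
    case less
    have "\<mu> \<le> qform M z / qform Q z"
    proof (rule mu_le)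
      fix r assume "r \<in> R"
      then consider "r = 0" | x where "r = qform M x / qform Q x" "qform Q x > 0"
        unfolding R_def by blast
      then show "r \<le> qform M z / qform Q z"
      proof cases
        case 1
        then show ?thesis using less cone[of z] by (simp add: divide_nonpos_neg)
      next
        case 2
        then show ?thesis using qform_ratio_separation[OF _ less cone] by simp
      qed
    qed
    then show ?thesis using less by (simp add: field_simps)
  next
    case equal
    then show ?thesis using cone[of z] by simp
  next
    case greater
    have "qform M z / qform Q z \<le> \<mu>" using greater by (intro R_le_mu) (auto simp: R_def)
    then show ?thesis using greater by (simp add: field_simps)
  qed
  moreover have "0 \<le> \<mu>" by (intro R_le_mu) (simp add: R_def)
  moreover have "\<mu> \<le> b" by (rule mu_le[OF R_le_b])
  ultimately show ?thesis by blast
qed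

text \<open>Invariance of {q_Q \<le> 1} under a linear map A, read off on rays (q_Q(Az) scales like
  q_Q(z)): q_Q \<circ> A is nonpositive on the cone {q_Q \<le> 0} and bounded by q_Q elsewhere.\<close>
lemma invariant_sublevel_cone:
  assumes inv: "\<And>x. qform Q x \<le> 1 \<Longrightarrow> qform Q (A *v x) \<le> 1"
    and "qform Q z \<le> 0"
  shows "qform Q (A *v z) \<le> 0"
proof (rule ccontr)
  assume image_pos: "\<not> qform Q (A *v z) \<le> 0"
  define c where "c = sqrt (2 / qform Q (A *v z))"
  have "c^2 = 2 / qform Q (A *v z)" using image_pos unfolding c_def by simp
  moreover have "qform Q (A *v (c *\<^sub>R z)) \<le> 1"
    using \<open>qform Q z \<le> 0\<close> mult_nonneg_nonpos[of "c^2" "qform Q z"]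
    by (intro inv) (simp add: qform_scaleR)
  ultimately show False
    using image_pos by (simp add: matrix_vector_mult_scaleR qform_scaleR)
qed

lemma invariant_sublevel_pos:
  assumes inv: "\<And>x. qform Q x \<le> 1 \<Longrightarrow> qform Q (A *v x) \<le> 1"
    and pos: "qform Q z > 0"
  shows "qform Q (A *v z) \<le> qform Q z"
proof -
  define c where "c = sqrt (1 / qform Q z)"
  have c2: "c^2 = 1 / qform Q z" using pos unfolding c_def by simp
  have "qform Q (A *v (c *\<^sub>R z)) \<le> 1"
    using pos by (intro inv) (simp add: qform_scaleR c2)
  then show ?thesis using pos by (simp add: matrix_vector_mult_scaleR qform_scaleR c2 field_simps)
qed

lemma multiplier_invariant:
  assumes "0 \<le> \<mu>" "\<mu> \<le> 1" and "qform Q (A *v x) \<le> \<mu> * qform Q x" and "qform Q x \<le> 1"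
  shows "qform Q (A *v x) \<le> 1"
proof -
  have "\<mu> * qform Q x \<le> 1"
  proof (cases "qform Q x \<ge> 0")
    case True
    then have "\<mu> * qform Q x \<le> qform Q x" using \<open>\<mu> \<le> 1\<close> mult_right_mono[of \<mu> 1 "qform Q x"] by simp
    then show ?thesis using assms(4) by simp
  next
    case False
    then show ?thesis using \<open>0 \<le> \<mu>\<close> mult_nonneg_nonpos[of \<mu> "qform Q x"] by simp
  qed
  then show ?thesis using assms(3) by simp
qed

theorem theorem3p13:
  fixes Q A :: "real^'n^'n"
  assumes "transpose Q = Q"
  defines "S \<equiv> {x::real^'n. x \<bullet> (Q *v x) \<le> 1}"
  shows "((\<lambda>x. A *v x) ` S \<subseteq> S) \<longleftrightarrow>
         (\<exists>\<mu>::real. 0 \<le> \<mu> \<and> \<mu> \<le> 1 \<and>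
            neg_semidef (transpose A ** Q ** A - \<mu> *\<^sub>R Q))"
proof -
  have invariant_iff: "(\<lambda>x. A *v x) ` S \<subseteq> S \<longleftrightarrow> (\<forall>x. qform Q x \<le> 1 \<longrightarrow> qform Q (A *v x) \<le> 1)"
    unfolding S_def qform_def by auto
  have multiplier_iff: "neg_semidef (transpose A ** Q ** A - \<mu> *\<^sub>R Q)
      \<longleftrightarrow> (\<forall>z. qform Q (A *v z) \<le> \<mu> * qform Q z)" for \<mu>
    by (simp add: neg_semidef_diff_iff qform_congruence)
  show ?thesis
  proof
    assume "(\<lambda>x. A *v x) ` S \<subseteq> S"
    then have inv: "\<And>x. qform Q x \<le> 1 \<Longrightarrow> qform Q (A *v x) \<le> 1" using invariant_iff by blast
    have "\<exists>\<mu>. 0 \<le> \<mu> \<and> \<mu> \<le> 1 \<and> (\<forall>z. qform Q (A *v z) \<le> \<mu> * qform Q z)"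
      using qform_multiplier_exists[where M = "transpose A ** Q ** A" and b = 1]
        invariant_sublevel_cone[OF inv] invariant_sublevel_pos[OF inv]
      unfolding qform_congruence by simp
    then show "\<exists>\<mu>. 0 \<le> \<mu> \<and> \<mu> \<le> 1 \<and> neg_semidef (transpose A ** Q ** A - \<mu> *\<^sub>R Q)"
      using multiplier_iff by blast
  next
    assume "\<exists>\<mu>. 0 \<le> \<mu> \<and> \<mu> \<le> 1 \<and> neg_semidef (transpose A ** Q ** A - \<mu> *\<^sub>R Q)"
    then obtain \<mu> where "0 \<le> \<mu>" "\<mu> \<le> 1" "\<forall>z. qform Q (A *v z) \<le> \<mu> * qform Q z"
      unfolding multiplier_iff by blast
    then show "(\<lambda>x. A *v x) ` S \<subseteq> S"
      unfolding invariant_iff using multiplier_invariant by blast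
  qed
qed

end
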